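(* Let $0\le\gamma_1<\dots<\gamma_p\le1$ and for each $i$ let $(\gamma_{i,n})_n$ be $[0,1]$-valued with $|\gamma_{i,n}-\gamma_i|=O(1/n)$. Then for every $i\in\{1,\dots,p\}$ there exist $\delta_i>0$ and $N\in\mathbb{N}$ such that $\phi_{n,\gamma_{i,n}}'(u)\ge\phi_{n,\gamma_{j,n}}'(u)$ for all $u\in(\gamma_i-\delta_i,\gamma_i+\delta_i)\cap[0,1]$, all $j\in\{1,\dots,p\}$ and all $n\ge N$.
   Context: $[x]$ is the integer part. $\phi_{n,\alpha}(t)=\sum_{j=1+[(n-1)\alpha]}^n\binom{n}{j}t^j(1-t)^{n-j}$, so $\phi_{n,\alpha}'(t)=n\binom{n-1}{[(n-1)\alpha]}t^{[(n-1)\alpha]}(1-t)^{n-[(n-1)\alpha]-1}$. *)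

theory Defs
  imports "HOL-Analysis.Analysis" "HOL-Library.Landau_Symbols"
begin

definition phi :: "nat \<Rightarrow> real \<Rightarrow> real \<Rightarrow> real" where
  "phi n \<alpha> t = (\<Sum>j = Suc (nat \<lfloor>real (n - 1) * \<alpha>\<rfloor>)..n.
                    real (n choose j) * t ^ j * (1 - t) ^ (n - j))"

text \<open>The derivative phi'_{n,alpha}(t), in the closed form given in the paper.\<close>
definition phi' :: "nat \<Rightarrow> real \<Rightarrow> real \<Rightarrow> real" where
  "phi' n \<alpha> t = (let k = nat \<lfloor>real (n - 1) * \<alpha>\<rfloor> in
      real n * real ((n - 1) choose k) * t ^ k * (1 - t) ^ (n - k - 1))"

end

theory Submission
  imports Defs
begin

(*
  Write m = n - 1 and k = nat (floor (m * alpha)); then phi' n alpha u is n times the Bernstein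
  term C(m,k) u^k (1-u)^(m-k), and the hypotheses give k_i = m gamma_i + O(1).  For gamma_i < gamma_j
  and u <= v, the quotient of the j-th by the i-th term is at most C(m,k_j) t^(k_j-k_i) / C(m,k_i),
  where t = v/(1-v) is the odds of v: a product of the consecutive ratios t (m-k)/(k+1) over
  k_i <= k < k_j.  For v slightly above gamma_i these ratios are eventually at most R on the lower
  half of that range and at most S < 1 on the upper half, with R S = 1, so the product is at most 1.
  For gamma_i = 0 the crude bound C(m,k) <= 2^m does the job instead, and gamma_j < gamma_i reduces
  to gamma_i < gamma_j under the reflection u -> 1 - u.
*)

definition bernstein :: "nat \<Rightarrow> nat \<Rightarrow> real \<Rightarrow> real" where
  "bernstein m k u = real (m choose k) * u ^ k * (1 - u) ^ (m - k)"

lemma phi'_eq_bernstein: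
  "phi' n \<alpha> u = real n * bernstein (n - 1) (nat \<lfloor>real (n - 1) * \<alpha>\<rfloor>) u"
  by (simp add: phi'_def bernstein_def Let_def diff_commute mult.assoc)

lemma bernstein_reflect: "k \<le> m \<Longrightarrow> bernstein m k u = bernstein m (m - k) (1 - u)"
  unfolding bernstein_def by (simp add: binomial_symmetric[of k m] mult_ac)

lemma bernstein_le_of_binomial_odds_le:
  fixes t u :: real
  assumes "a \<le> b" "b \<le> m" "0 \<le> u" "u \<le> 1" "u \<le> t * (1 - u)"
    and "real (m choose b) * t ^ (b - a) \<le> real (m choose a)"
  shows "bernstein m b u \<le> bernstein m a u"
proof -
  define K where "K = b - a"
  have "u ^ K \<le> (t * (1 - u)) ^ K"
    using assms by (intro power_mono) auto
  then have "real (m choose b) * u ^ K \<le> real (m choose b) * t ^ K * (1 - u) ^ K"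
    by (simp add: mult_left_mono power_mult_distrib mult.assoc)
  also have "\<dots> \<le> real (m choose a) * (1 - u) ^ K"
    using assms by (intro mult_right_mono) (auto simp: K_def)
  finally have "real (m choose b) * u ^ K * (u ^ a * (1 - u) ^ (m - b))
      \<le> real (m choose a) * (1 - u) ^ K * (u ^ a * (1 - u) ^ (m - b))"
    using assms by (intro mult_right_mono) auto
  moreover have "b = a + K" "m - a = K + (m - b)"
    using assms by (auto simp: K_def)
  ultimately show ?thesis
    unfolding bernstein_def by (simp add: power_add mult_ac)
qed

lemma binomial_mult_prod_Suc:
  assumes "a \<le> b" "b \<le> m"
  shows "(m choose b) * (\<Prod>k\<in>{a..<b}. Suc k) = (m choose a) * (\<Prod>k\<in>{a..<b}. m - k)"
  using assms
proof (induction b)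
  case 0
  then show ?case by simp
next
  case (Suc b)
  show ?case
  proof (cases "a = Suc b")
    case False
    with Suc.prems have "a \<le> b" by simp
    have absorb: "(m choose Suc b) * Suc b = (m choose b) * (m - b)"
      by (metis binomial_absorb_comp binomial_absorption mult.commute)
    have "(m choose Suc b) * (\<Prod>k\<in>{a..<Suc b}. Suc k)
        = (m choose Suc b) * Suc b * (\<Prod>k\<in>{a..<b}. Suc k)"
      using \<open>a \<le> b\<close> by (simp add: prod.atLeastLessThan_Suc algebra_simps)
    also have "\<dots> = (m - b) * ((m choose b) * (\<Prod>k\<in>{a..<b}. Suc k))"
      by (metis absorb mult.assoc mult.commute)
    also have "\<dots> = (m choose a) * (\<Prod>k\<in>{a..<Suc b}. m - k)"
      using Suc \<open>a \<le> b\<close> by (simp add: prod.atLeastLessThan_Suc)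
    finally show ?thesis .
  qed simp
qed

lemma binomial_odds_le_of_prod_le:
  fixes t :: real
  assumes "a \<le> b" "b \<le> m"
    and "(\<Prod>k\<in>{a..<b}. t * real (m - k)) \<le> (\<Prod>k\<in>{a..<b}. real (Suc k))"
  shows "real (m choose b) * t ^ (b - a) \<le> real (m choose a)"
proof -
  define P where "P = (\<Prod>k\<in>{a..<b}. real (Suc k))"
  have "P > 0"
    unfolding P_def by (intro prod_pos) auto
  have "real (m choose b) * t ^ (b - a) * P = real (m choose a) * (\<Prod>k\<in>{a..<b}. t * real (m - k))"
    using arg_cong[OF binomial_mult_prod_Suc[OF assms(1,2)], of real]
    by (simp add: P_def prod.distrib mult_ac)
  also have "\<dots> \<le> real (m choose a) * P"
    using assms(3) by (simp add: P_def mult_left_mono)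
  finally show ?thesis
    using \<open>P > 0\<close> by simp
qed

lemma pow_mult_pow_le_one:
  fixes R S :: real
  assumes "0 \<le> R" "0 \<le> S" "S \<le> 1" "R * S \<le> 1" "k \<le> l"
  shows "R ^ k * S ^ l \<le> 1"
proof -
  have "S ^ l = S ^ k * S ^ (l - k)"
    using assms(5) by (simp flip: power_add)
  then have "R ^ k * S ^ l = (R * S) ^ k * S ^ (l - k)"
    by (simp add: power_mult_distrib mult_ac)
  also have "\<dots> \<le> 1 * 1"
    using assms by (intro mult_mono power_le_one) auto
  finally show ?thesis by simp
qed

lemma prod_le_prod_two_ratios:
  fixes f g :: "nat \<Rightarrow> real" and R S :: real
  assumes "a \<le> c" "c \<le> b" "c - a \<le> b - c"
    and "0 \<le> R" "0 \<le> S" "S \<le> 1" "R * S \<le> 1"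
    and "\<And>k. k \<in> {a..<b} \<Longrightarrow> 0 \<le> f k \<and> 0 \<le> g k"
    and "\<And>k. k \<in> {a..<c} \<Longrightarrow> f k \<le> R * g k"
    and "\<And>k. k \<in> {c..<b} \<Longrightarrow> f k \<le> S * g k"
  shows "(\<Prod>k\<in>{a..<b}. f k) \<le> (\<Prod>k\<in>{a..<b}. g k)"
proof -
  have ratio: "(\<Prod>k\<in>{l..<h}. f k) \<le> Q ^ (h - l) * (\<Prod>k\<in>{l..<h}. g k)"
    if "{l..<h} \<subseteq> {a..<b}" "0 \<le> Q" "\<And>k. k \<in> {l..<h} \<Longrightarrow> f k \<le> Q * g k" for l h Q
  proof -
    have "(\<Prod>k\<in>{l..<h}. f k) \<le> (\<Prod>k\<in>{l..<h}. Q * g k)"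
      using that assms(8) by (intro prod_mono) auto
    then show ?thesis
      by (simp add: prod.distrib)
  qed
  have nonneg: "0 \<le> f k" "0 \<le> g k" if "a \<le> k" "k < b" for k
    using assms(8) that by auto
  have split: "{a..<b} = {a..<c} \<union> {c..<b}" "{a..<c} \<inter> {c..<b} = {}"
    using assms(1,2) by auto
  have "(\<Prod>k\<in>{a..<b}. f k) = (\<Prod>k\<in>{a..<c}. f k) * (\<Prod>k\<in>{c..<b}. f k)"
    unfolding split(1) by (rule prod.union_disjoint) (use split(2) in auto)
  also have "\<dots> \<le> (R ^ (c - a) * (\<Prod>k\<in>{a..<c}. g k)) * (S ^ (b - c) * (\<Prod>k\<in>{c..<b}. g k))"
  proof (rule mult_mono)
    show "(\<Prod>k\<in>{a..<c}. f k) \<le> R ^ (c - a) * (\<Prod>k\<in>{a..<c}. g k)"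
      using assms(2,4,9) by (intro ratio) auto
    show "(\<Prod>k\<in>{c..<b}. f k) \<le> S ^ (b - c) * (\<Prod>k\<in>{c..<b}. g k)"
      using assms(1,5,10) by (intro ratio) auto
    show "0 \<le> R ^ (c - a) * (\<Prod>k\<in>{a..<c}. g k)"
      using assms(2,4) nonneg(2) by (intro mult_nonneg_nonneg zero_le_power prod_nonneg) auto
    show "0 \<le> (\<Prod>k\<in>{c..<b}. f k)"
      using assms(1) nonneg(1) by (intro prod_nonneg) auto
  qed
  also have "\<dots> = (R ^ (c - a) * S ^ (b - c)) * (\<Prod>k\<in>{a..<b}. g k)"
    using assms(1,2) by (simp add: prod.atLeastLessThan_concat mult_ac)
  also have "\<dots> \<le> 1 * (\<Prod>k\<in>{a..<b}. g k)"
    using assms(3-7) nonneg by (intro mult_right_mono pow_mult_pow_le_one prod_nonneg) auto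
  finally show ?thesis by simp
qed

lemma binomial_ratio_bound_mono:
  fixes x t R :: real
  assumes "x \<le> real k" "k \<le> m" "0 \<le> t" "0 \<le> R"
    and "t * (real m - x) \<le> R * (x + 1)"
  shows "t * real (m - k) \<le> R * real (Suc k)"
proof -
  have "t * real (m - k) \<le> t * (real m - x)"
    using assms by (intro mult_left_mono) (auto simp: of_nat_diff)
  also have "\<dots> \<le> R * (x + 1)" by fact
  also have "\<dots> \<le> R * real (Suc k)"
    using assms by (intro mult_left_mono) auto
  finally show ?thesis .
qed

lemma eventually_le_real_mult:
  fixes c B :: real
  assumes "0 < c"
  shows "eventually (\<lambda>m. B \<le> real m * c) sequentially"
proof -
  obtain N :: nat where "B / c \<le> real N"
    using real_arch_simple by blast
  then have "B \<le> real N * c"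
    using assms by (simp add: pos_divide_le_eq)
  then have "B \<le> real m * c" if "N \<le> m" for m
    using that assms by (meson order.trans mult_right_mono of_nat_mono less_imp_le)
  then show ?thesis
    unfolding eventually_sequentially by blast
qed

lemma odds_two_ratios_choice:
  fixes \<gamma> c :: real
  assumes "0 < \<gamma>" "\<gamma> < c" "c < 1"
  obtains t R S where "0 < t" "\<gamma> < t / (1 + t)" "0 < R" "0 < S" "S < 1" "R * S = 1"
    "t * (1 - \<gamma>) < R * \<gamma>" "t * (1 - c) < S * c"
proof -
  \<comment> \<open>\<open>t * (1 - x) < R * x\<close> says that \<open>t\<close> is below \<open>R\<close> times the odds of \<open>x\<close>; take \<open>t\<close> between the odds
    of \<open>\<gamma>\<close> and the geometric mean \<open>s\<close> of the odds of \<open>\<gamma>\<close> and \<open>c\<close>.\<close>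
  define o\<gamma> oc where "o\<gamma> = \<gamma> / (1 - \<gamma>)" and "oc = c / (1 - c)"
  have o: "0 < o\<gamma>" "o\<gamma> < oc"
    using assms by (auto simp: o\<gamma>_def oc_def field_simps)
  define s where "s = sqrt (o\<gamma> * oc)"
  have "sqrt (o\<gamma> * o\<gamma>) < s" "s < sqrt (oc * oc)"
    unfolding s_def using o by (simp_all only: real_sqrt_less_iff mult_less_cancel_left_pos mult_less_cancel_right_pos)
  then have s: "o\<gamma> < s" "s < oc" "s * s = o\<gamma> * oc"
    using o by (auto simp: s_def)
  define t where "t = (o\<gamma> + s) / 2"
  have t: "o\<gamma> < t" "t < s"
    using s by (auto simp: t_def)
  show thesis
  proof
    show "0 < t" "0 < s / o\<gamma>" "0 < s / oc" "s / oc < 1"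
      using o s t by auto
    show "s / o\<gamma> * (s / oc) = 1"
      using o s by (simp add: field_simps)
    have "\<gamma> * (1 + t) < t"
      using assms t by (simp add: o\<gamma>_def field_simps)
    then show "\<gamma> < t / (1 + t)"
      using o t by (simp add: pos_less_divide_eq)
    have "s / o\<gamma> * \<gamma> = s * (1 - \<gamma>)" "s / oc * c = s * (1 - c)"
      using assms by (auto simp: o\<gamma>_def oc_def)
    then show "t * (1 - \<gamma>) < s / o\<gamma> * \<gamma>" "t * (1 - c) < s / oc * c"
      using assms t by (auto intro: mult_strict_right_mono)
  qed
qed

definition binomial_odds_dominates :: "real \<Rightarrow> real \<Rightarrow> real \<Rightarrow> real \<Rightarrow> nat \<Rightarrow> bool" where
  "binomial_odds_dominates \<gamma> \<gamma>' C t m \<longleftrightarrow>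
    (\<forall>a b. a \<le> m \<longrightarrow> b \<le> m \<longrightarrow> \<bar>real a - real m * \<gamma>\<bar> \<le> C \<longrightarrow> \<bar>real b - real m * \<gamma>'\<bar> \<le> C \<longrightarrow>
      a \<le> b \<and> real (m choose b) * t ^ (b - a) \<le> real (m choose a))"

lemma binomial_odds_dominates_of_two_ratios:
  fixes \<gamma> \<gamma>' c C t R S :: real
  assumes "0 \<le> t" "0 \<le> R" "0 \<le> S" "S \<le> 1" "R * S \<le> 1" "2 * c \<le> \<gamma> + \<gamma>'"
    and lin: "t * C + R * C - R \<le> real m * (R * \<gamma> - t * (1 - \<gamma>))"
      "t * (C + 1) + S * C \<le> real m * (S * c - t * (1 - c))"
      "2 * C + 1 \<le> real m * (\<gamma>' - \<gamma>)"
  shows "binomial_odds_dominates \<gamma> \<gamma>' C t m"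
  unfolding binomial_odds_dominates_def
proof (intro allI impI)
  fix a b assume "a \<le> m" and bm: "b \<le> m"
    and ha: "\<bar>real a - real m * \<gamma>\<bar> \<le> C" and hb: "\<bar>real b - real m * \<gamma>'\<bar> \<le> C"
  have "real a < real b"
    using ha hb lin(3) by (simp add: algebra_simps abs_le_iff)
  then have ab: "a \<le> b" by simp
  define mid where "mid = a + (b - a) div 2"
  have mid: "a \<le> mid" "mid \<le> b" "mid - a \<le> b - mid" "a + b \<le> 2 * mid + 1"
    using ab unfolding mid_def by (linarith, linarith, linarith, presburger)
  then have "real (a + b) \<le> real (2 * mid + 1)"
    by (simp only: of_nat_le_iff)
  moreover have "real m * (2 * c) \<le> real m * (\<gamma> + \<gamma>')"
    using assms(6) by (intro mult_left_mono) auto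
  ultimately have mid_ge: "real m * c - C - 1 \<le> real mid"
    using ha hb by (simp add: abs_le_iff algebra_simps)
  have "t * (real m - (real m * \<gamma> - C)) \<le> R * (real m * \<gamma> - C + 1)"
    using lin(1) by (simp add: algebra_simps)
  then have low: "t * real (m - k) \<le> R * real (Suc k)" if "a \<le> k" "k \<le> m" for k
    using ha that assms(1,2) by (intro binomial_ratio_bound_mono) (auto simp: abs_le_iff)
  have "t * (real m - (real m * c - C - 1)) \<le> S * (real m * c - C - 1 + 1)"
    using lin(2) by (simp add: algebra_simps)
  then have high: "t * real (m - k) \<le> S * real (Suc k)" if "mid \<le> k" "k \<le> m" for k
    using mid_ge that assms(1,3) by (intro binomial_ratio_bound_mono[where x = "real m * c - C - 1"]) auto
  have "(\<Prod>k\<in>{a..<b}. t * real (m - k)) \<le> (\<Prod>k\<in>{a..<b}. real (Suc k))"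
  proof (rule prod_le_prod_two_ratios[OF mid(1-3) assms(2-5)])
    show "0 \<le> t * real (m - k) \<and> 0 \<le> real (Suc k)" for k
      using assms(1) by simp
    show "t * real (m - k) \<le> R * real (Suc k)" if "k \<in> {a..<mid}" for k
      using that mid bm by (intro low) auto
    show "t * real (m - k) \<le> S * real (Suc k)" if "k \<in> {mid..<b}" for k
      using that bm by (intro high) auto
  qed
  then show "a \<le> b \<and> real (m choose b) * t ^ (b - a) \<le> real (m choose a)"
    using ab bm by (simp add: binomial_odds_le_of_prod_le)
qed

lemma eventually_binomial_odds_dominates_interior:
  fixes \<gamma> \<gamma>' C :: real
  assumes "0 < \<gamma>" "\<gamma> < \<gamma>'" "\<gamma>' \<le> 1"
  obtains t where "0 < t" "\<gamma> < t / (1 + t)" "eventually (binomial_odds_dominates \<gamma> \<gamma>' C t) sequentially"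
proof -
  define c where "c = (\<gamma> + \<gamma>') / 2"
  obtain t R S where t: "0 < t" "\<gamma> < t / (1 + t)" and RS: "0 < R" "0 < S" "S < 1" "R * S = 1"
    and margin: "t * (1 - \<gamma>) < R * \<gamma>" "t * (1 - c) < S * c"
    using odds_two_ratios_choice[of \<gamma> c] assms by (auto simp: c_def)
  have "eventually (\<lambda>m. t * C + R * C - R \<le> real m * (R * \<gamma> - t * (1 - \<gamma>))
      \<and> t * (C + 1) + S * C \<le> real m * (S * c - t * (1 - c))
      \<and> 2 * C + 1 \<le> real m * (\<gamma>' - \<gamma>)) sequentially"
    using margin assms by (intro eventually_conj eventually_le_real_mult) auto
  then have "eventually (binomial_odds_dominates \<gamma> \<gamma>' C t) sequentially"
  proof eventually_elim
    case (elim m)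
    with t RS show ?case
      by (intro binomial_odds_dominates_of_two_ratios[where R = R and S = S and c = c]) (auto simp: c_def)
  qed
  with t show thesis
    by (rule that)
qed

lemma binomial_odds_dominates_zero:
  fixes \<gamma>' C :: real
  assumes d: "2 \<le> real d * \<gamma>'"
    and lin: "2 * C + 1 \<le> real m * \<gamma>'" "2 * real d * C \<le> real m"
  shows "binomial_odds_dominates 0 \<gamma>' C ((1 / 2) ^ d) m"
  unfolding binomial_odds_dominates_def
proof (intro allI impI)
  fix a b assume am: "a \<le> m" and "b \<le> m"
    and "\<bar>real a - real m * 0\<bar> \<le> C" and hb: "\<bar>real b - real m * \<gamma>'\<bar> \<le> C"
  then have ha: "real a \<le> C" by simp
  have "real a < real b"
    using ha hb lin(1) by (simp add: abs_le_iff algebra_simps)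
  then have ab: "a \<le> b" by simp
  have "real m * 2 \<le> real m * (real d * \<gamma>')"
    using d by (intro mult_left_mono) auto
  then have "real m \<le> real d * (real m * \<gamma>' - 2 * C)"
    using lin(2) by (simp add: algebra_simps)
  also have "\<dots> \<le> real d * real (b - a)"
    using ha hb ab by (intro mult_left_mono) (auto simp: abs_le_iff of_nat_diff)
  finally have "m \<le> d * (b - a)"
    by (simp flip: of_nat_mult)
  then have "((1 / 2) ^ d) ^ (b - a) \<le> (1 / 2 :: real) ^ m"
    unfolding power_mult[symmetric] by (intro power_decreasing) auto
  then have "real (m choose b) * ((1 / 2) ^ d) ^ (b - a) \<le> 2 ^ m * (1 / 2) ^ m"
    by (intro mult_mono) (auto simp: binomial_le_pow2 simp flip: of_nat_power)
  also have "\<dots> \<le> real (m choose a)"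
    using am by (simp add: power_one_over Suc_le_eq)
  finally show "a \<le> b \<and> real (m choose b) * ((1 / 2) ^ d) ^ (b - a) \<le> real (m choose a)"
    using ab by blast
qed

lemma eventually_binomial_odds_dominates_zero:
  fixes \<gamma>' C :: real
  assumes "0 < \<gamma>'"
  obtains t where "0 < t" "eventually (binomial_odds_dominates 0 \<gamma>' C t) sequentially"
proof -
  obtain d :: nat where "2 / \<gamma>' \<le> real d"
    using real_arch_simple by blast
  then have d: "2 \<le> real d * \<gamma>'"
    using assms by (simp add: pos_divide_le_eq)
  have "eventually (\<lambda>m. 2 * C + 1 \<le> real m * \<gamma>' \<and> 2 * real d * C \<le> real m * 1) sequentially"
    using assms by (intro eventually_conj eventually_le_real_mult) auto
  then have "eventually (binomial_odds_dominates 0 \<gamma>' C ((1 / 2) ^ d)) sequentially"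
    by eventually_elim (use d in \<open>simp add: binomial_odds_dominates_zero\<close>)
  then show thesis
    by (intro that) simp_all
qed

lemma eventually_binomial_odds_dominates:
  fixes \<gamma> \<gamma>' C :: real
  assumes "0 \<le> \<gamma>" "\<gamma> < \<gamma>'" "\<gamma>' \<le> 1"
  obtains t where "0 < t" "\<gamma> < t / (1 + t)" "eventually (binomial_odds_dominates \<gamma> \<gamma>' C t) sequentially"
proof (cases "\<gamma> = 0")
  case True
  with assms show thesis
    using eventually_binomial_odds_dominates_zero[of \<gamma>' C] that by auto
next
  case False
  with assms show thesis
    using eventually_binomial_odds_dominates_interior[of \<gamma> \<gamma>' C] that by auto
qed

lemma eventually_bernstein_le_right:
  fixes a b :: "nat \<Rightarrow> nat" and \<gamma> \<gamma>' :: real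
  assumes "0 \<le> \<gamma>" "\<gamma> < \<gamma>'" "\<gamma>' \<le> 1"
    and "\<And>m. a m \<le> m" "\<And>m. b m \<le> m"
    and "(\<lambda>m. real (a m) - real m * \<gamma>) \<in> O(\<lambda>_. 1)"
    and "(\<lambda>m. real (b m) - real m * \<gamma>') \<in> O(\<lambda>_. 1)"
  obtains \<delta> where "0 < \<delta>"
    "eventually (\<lambda>m. \<forall>u\<in>{0..1}. u < \<gamma> + \<delta> \<longrightarrow> bernstein m (b m) u \<le> bernstein m (a m) u)
      sequentially"
proof -
  obtain Ca where Ca: "eventually (\<lambda>m. \<bar>real (a m) - real m * \<gamma>\<bar> \<le> Ca) sequentially"
    using assms(6) by (elim landau_o.bigE) auto
  obtain Cb where Cb: "eventually (\<lambda>m. \<bar>real (b m) - real m * \<gamma>'\<bar> \<le> Cb) sequentially"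
    using assms(7) by (elim landau_o.bigE) auto
  obtain t where t: "0 < t" "\<gamma> < t / (1 + t)"
    and odds: "eventually (binomial_odds_dominates \<gamma> \<gamma>' (max Ca Cb) t) sequentially"
    using eventually_binomial_odds_dominates[OF assms(1-3)] by blast
  show thesis
  proof (rule that[of "t / (1 + t) - \<gamma>"])
    show "0 < t / (1 + t) - \<gamma>"
      using t by simp
    have *: "bernstein m (b m) u \<le> bernstein m (a m) u"
      if "a m \<le> b m" "real (m choose b m) * t ^ (b m - a m) \<le> real (m choose a m)"
        "u \<in> {0..1}" "u < t / (1 + t)" for m u
    proof (rule bernstein_le_of_binomial_odds_le[OF that(1) assms(5) _ _ _ that(2)])
      show "0 \<le> u" "u \<le> 1" using that(3) by auto
      show "u \<le> t * (1 - u)"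
        using that(4) t by (simp add: field_simps)
    qed
    show "eventually (\<lambda>m. \<forall>u\<in>{0..1}. u < \<gamma> + (t / (1 + t) - \<gamma>) \<longrightarrow>
        bernstein m (b m) u \<le> bernstein m (a m) u) sequentially"
      using eventually_conj[OF odds eventually_conj[OF Ca Cb]]
    proof eventually_elim
      case (elim m)
      then have "a m \<le> b m \<and> real (m choose b m) * t ^ (b m - a m) \<le> real (m choose a m)"
        using assms(4,5) unfolding binomial_odds_dominates_def by force
      then show ?case
        by (auto intro: *)
    qed
  qed
qed

lemma reflected_deviation_bigo:
  fixes c :: "nat \<Rightarrow> nat" and \<theta> :: real
  assumes "\<And>m. c m \<le> m" "(\<lambda>m. real (c m) - real m * \<theta>) \<in> O(\<lambda>_. 1)"
  shows "(\<lambda>m. real (m - c m) - real m * (1 - \<theta>)) \<in> O(\<lambda>_. 1)"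
proof -
  have "(\<lambda>m. real (m - c m) - real m * (1 - \<theta>)) = (\<lambda>m. - (real (c m) - real m * \<theta>))"
    using assms(1) by (auto simp: of_nat_diff algebra_simps)
  then show ?thesis
    using assms(2) by (simp only: landau_o.big.uminus_in_iff)
qed

lemma eventually_bernstein_le_near:
  fixes a b :: "nat \<Rightarrow> nat" and \<gamma> \<gamma>' :: real
  assumes "\<gamma> \<in> {0..1}" "\<gamma>' \<in> {0..1}" "\<gamma> \<noteq> \<gamma>'"
    and "\<And>m. a m \<le> m" "\<And>m. b m \<le> m"
    and "(\<lambda>m. real (a m) - real m * \<gamma>) \<in> O(\<lambda>_. 1)"
    and "(\<lambda>m. real (b m) - real m * \<gamma>') \<in> O(\<lambda>_. 1)"
  obtains \<delta> where "0 < \<delta>"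
    "eventually (\<lambda>m. \<forall>u\<in>{0..1}. dist u \<gamma> < \<delta> \<longrightarrow> bernstein m (b m) u \<le> bernstein m (a m) u)
      sequentially"
proof (cases "\<gamma> < \<gamma>'")
  case True
  obtain \<delta> where \<delta>: "0 < \<delta>" and ev: "eventually (\<lambda>m. \<forall>u\<in>{0..1}. u < \<gamma> + \<delta> \<longrightarrow>
      bernstein m (b m) u \<le> bernstein m (a m) u) sequentially"
    using eventually_bernstein_le_right[of \<gamma> \<gamma>' a b] assms True by auto
  from ev have "eventually (\<lambda>m. \<forall>u\<in>{0..1}. dist u \<gamma> < \<delta> \<longrightarrow>
      bernstein m (b m) u \<le> bernstein m (a m) u) sequentially"
    by eventually_elim (auto simp: dist_real_def)
  with \<delta> show thesis
    by (rule that)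
next
  case False
  with assms(3) have "1 - \<gamma> < 1 - \<gamma>'" by simp
  obtain \<delta> where \<delta>: "0 < \<delta>" and ev: "eventually (\<lambda>m. \<forall>u\<in>{0..1}. u < 1 - \<gamma> + \<delta> \<longrightarrow>
      bernstein m (m - b m) u \<le> bernstein m (m - a m) u) sequentially"
    using eventually_bernstein_le_right[of "1 - \<gamma>" "1 - \<gamma>'" "\<lambda>m. m - a m" "\<lambda>m. m - b m"]
      \<open>1 - \<gamma> < 1 - \<gamma>'\<close> assms reflected_deviation_bigo by auto
  from ev have "eventually (\<lambda>m. \<forall>u\<in>{0..1}. dist u \<gamma> < \<delta> \<longrightarrow>
      bernstein m (b m) u \<le> bernstein m (a m) u) sequentially"
  proof eventually_elim
    case (elim m)
    show ?case
    proof (intro ballI impI)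
      fix u :: real assume "u \<in> {0..1}" "dist u \<gamma> < \<delta>"
      then have "bernstein m (m - b m) (1 - u) \<le> bernstein m (m - a m) (1 - u)"
        using elim by (auto simp: dist_real_def)
      then show "bernstein m (b m) u \<le> bernstein m (a m) u"
        using assms(4,5) by (simp add: bernstein_reflect[of "a m"] bernstein_reflect[of "b m"])
    qed
  qed
  with \<delta> show thesis
    by (rule that)
qed

lemma nat_floor_mult_le: "\<alpha> \<le> 1 \<Longrightarrow> nat \<lfloor>real m * \<alpha>\<rfloor> \<le> m"
  using mult_left_le[of \<alpha> "real m"] by (simp add: nat_le_iff floor_le_iff)

lemma nat_floor_mult_deviation_bigo:
  fixes h :: "nat \<Rightarrow> real"
  assumes "\<And>m. 0 \<le> h m" and "(\<lambda>m. real m * (h m - \<gamma>)) \<in> O(\<lambda>_. 1)"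
  shows "(\<lambda>m. real (nat \<lfloor>real m * h m\<rfloor>) - real m * \<gamma>) \<in> O(\<lambda>_. 1)"
proof -
  have "(\<lambda>m. real (nat \<lfloor>real m * h m\<rfloor>) - real m * h m) \<in> O(\<lambda>_. 1)"
  proof (rule landau_o.bigI[of 1])
    have "\<bar>real (nat \<lfloor>real m * h m\<rfloor>) - real m * h m\<bar> \<le> 1" for m
      using assms(1)[of m] by (simp add: abs_le_iff) linarith
    then show "eventually (\<lambda>m. norm (real (nat \<lfloor>real m * h m\<rfloor>) - real m * h m) \<le> 1 * norm (1::real))
        sequentially"
      by simp
  qed simp
  from sum_in_bigo(1)[OF this assms(2)] show ?thesis
    by (simp add: algebra_simps)
qed

lemma shifted_scaled_deviation_bigo:
  fixes h :: "nat \<Rightarrow> real"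
  assumes "(\<lambda>n. h n - \<gamma>) \<in> O(\<lambda>n. 1 / real n)"
  shows "(\<lambda>m. real m * (h (Suc m) - \<gamma>)) \<in> O(\<lambda>_. 1)"
proof -
  have "(\<lambda>m. h (Suc m) - \<gamma>) \<in> O(\<lambda>m. 1 / real (Suc m))"
    using landau_o.big.compose[OF assms filterlim_Suc] by simp
  then have "(\<lambda>m. real m * (h (Suc m) - \<gamma>)) \<in> O(\<lambda>m. real m * (1 / real (Suc m)))"
    by (rule landau_o.big.mult_left)
  moreover have "(\<lambda>m. real m * (1 / real (Suc m))) \<in> O(\<lambda>_. 1)"
    by (intro landau_o.bigI[of 1]) auto
  ultimately show ?thesis
    by (rule landau_o.big_trans)
qed

lemma eventually_nhds_prod_sequentially_E:
  fixes x :: "'a :: metric_space"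
  assumes "eventually P (nhds x \<times>\<^sub>F sequentially)"
  obtains \<delta> N where "0 < \<delta>" "\<And>u n. dist u x < \<delta> \<Longrightarrow> N \<le> n \<Longrightarrow> P (u, n)"
proof -
  obtain Pu Pn where "eventually Pu (nhds x)" "eventually Pn sequentially"
    and P: "\<And>u n. Pu u \<Longrightarrow> Pn n \<Longrightarrow> P (u, n)"
    using assms unfolding eventually_prod_filter by blast
  moreover obtain \<delta> where "0 < \<delta>" "\<And>u. dist u x < \<delta> \<Longrightarrow> Pu u"
    using \<open>eventually Pu (nhds x)\<close> unfolding eventually_nhds_metric by blast
  moreover obtain N where "\<And>n. N \<le> n \<Longrightarrow> Pn n"
    using \<open>eventually Pn sequentially\<close> unfolding eventually_sequentially by blast
  ultimately show thesis
    using that by blast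
qed

lemma eventually_phi'_le:
  fixes g g' :: "nat \<Rightarrow> real" and \<gamma> \<gamma>' :: real
  assumes "\<gamma> \<in> {0..1}" "\<gamma>' \<in> {0..1}" "\<gamma> \<noteq> \<gamma>'"
    and "\<And>n. g n \<in> {0..1}" "\<And>n. g' n \<in> {0..1}"
    and "(\<lambda>n. g n - \<gamma>) \<in> O(\<lambda>n. 1 / real n)" "(\<lambda>n. g' n - \<gamma>') \<in> O(\<lambda>n. 1 / real n)"
  shows "eventually (\<lambda>(u, n). u \<in> {0..1} \<longrightarrow> phi' n (g' n) u \<le> phi' n (g n) u)
    (nhds \<gamma> \<times>\<^sub>F sequentially)"
proof -
  define a b where "a m = nat \<lfloor>real m * g (Suc m)\<rfloor>" and "b m = nat \<lfloor>real m * g' (Suc m)\<rfloor>" for m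
  have "a m \<le> m" "b m \<le> m" for m
    using assms(4,5) by (auto simp: a_def b_def nat_floor_mult_le)
  moreover have "(\<lambda>m. real (a m) - real m * \<gamma>) \<in> O(\<lambda>_. 1)"
    unfolding a_def using assms(4) by (intro nat_floor_mult_deviation_bigo shifted_scaled_deviation_bigo[OF assms(6)]) auto
  moreover have "(\<lambda>m. real (b m) - real m * \<gamma>') \<in> O(\<lambda>_. 1)"
    unfolding b_def using assms(5) by (intro nat_floor_mult_deviation_bigo shifted_scaled_deviation_bigo[OF assms(7)]) auto
  ultimately obtain \<delta> where \<delta>: "0 < \<delta>" and ev: "eventually (\<lambda>m. \<forall>u\<in>{0..1}. dist u \<gamma> < \<delta> \<longrightarrow>
      bernstein m (b m) u \<le> bernstein m (a m) u) sequentially"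
    by (rule eventually_bernstein_le_near[OF assms(1-3)])
  have evn: "eventually (\<lambda>n. \<forall>u\<in>{0..1}. dist u \<gamma> < \<delta> \<longrightarrow> phi' n (g' n) u \<le> phi' n (g n) u)
      sequentially"
  proof (rule eventually_sequentially_Suc[THEN iffD1])
    show "eventually (\<lambda>m. \<forall>u\<in>{0..1}. dist u \<gamma> < \<delta> \<longrightarrow>
        phi' (Suc m) (g' (Suc m)) u \<le> phi' (Suc m) (g (Suc m)) u) sequentially"
      using ev by eventually_elim (simp add: phi'_eq_bernstein a_def b_def)
  qed
  have evu: "eventually (\<lambda>u. dist u \<gamma> < \<delta>) (nhds \<gamma>)"
    unfolding eventually_nhds_metric using \<delta> by blast
  show ?thesis
    unfolding eventually_prod_filter by (intro exI conjI, rule evu, rule evn) auto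
qed

theorem lemma5p1:
  fixes p :: nat and \<gamma> :: "nat \<Rightarrow> real" and g :: "nat \<Rightarrow> nat \<Rightarrow> real"
  assumes range: "\<And>i. i \<in> {1..p} \<Longrightarrow> 0 \<le> \<gamma> i \<and> \<gamma> i \<le> 1"
    and incr: "\<And>i j. i \<in> {1..p} \<Longrightarrow> j \<in> {1..p} \<Longrightarrow> i < j \<Longrightarrow> \<gamma> i < \<gamma> j"
    and grange: "\<And>i n. i \<in> {1..p} \<Longrightarrow> 0 \<le> g i n \<and> g i n \<le> 1"
    and rate: "\<And>i. i \<in> {1..p} \<Longrightarrow> (\<lambda>n. g i n - \<gamma> i) \<in> O(\<lambda>n. 1 / real n)"
  shows "\<forall>i\<in>{1..p}. \<exists>\<delta>>0. \<exists>N::nat. \<forall>u. u \<in> {\<gamma> i - \<delta> <..< \<gamma> i + \<delta>} \<inter> {0..1} \<longrightarrow>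
           (\<forall>j\<in>{1..p}. \<forall>n\<ge>N. phi' n (g i n) u \<ge> phi' n (g j n) u)"
proof
  fix i assume i: "i \<in> {1..p}"
  have pair: "eventually (\<lambda>(u, n). u \<in> {0..1} \<longrightarrow> phi' n (g j n) u \<le> phi' n (g i n) u)
      (nhds (\<gamma> i) \<times>\<^sub>F sequentially)" if j: "j \<in> {1..p}" for j
  proof (cases "i = j")
    case False
    then have "\<gamma> i \<noteq> \<gamma> j"
      using incr[OF i j] incr[OF j i] by (auto simp: neq_iff)
    then show ?thesis
      using i j range grange rate by (intro eventually_phi'_le) auto
  qed (simp add: case_prod_unfold)
  have "eventually (\<lambda>x. \<forall>j\<in>{1..p}. (\<lambda>(u, n). u \<in> {0..1} \<longrightarrow> phi' n (g j n) u \<le> phi' n (g i n) u) x)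
      (nhds (\<gamma> i) \<times>\<^sub>F sequentially)"
    using pair by (intro eventually_ball_finite) auto
  then show "\<exists>\<delta>>0. \<exists>N::nat. \<forall>u. u \<in> {\<gamma> i - \<delta> <..< \<gamma> i + \<delta>} \<inter> {0..1} \<longrightarrow>
      (\<forall>j\<in>{1..p}. \<forall>n\<ge>N. phi' n (g i n) u \<ge> phi' n (g j n) u)"
  proof (rule eventually_nhds_prod_sequentially_E)
    fix \<delta> N assume "0 < \<delta>" "\<And>u n. dist u (\<gamma> i) < \<delta> \<Longrightarrow> N \<le> n \<Longrightarrow>
      \<forall>j\<in>{1..p}. (\<lambda>(u, n). u \<in> {0..1} \<longrightarrow> phi' n (g j n) u \<le> phi' n (g i n) u) (u, n)"
    then show ?thesis
      by (intro exI[of _ \<delta>] exI[of _ N] conjI) (auto simp: dist_real_def abs_less_iff)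
  qed
qed

end
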